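(* Let $G$ be a connected weighted multigraph on the vertex set $V$, $|V|\ge2$, with positive edge weights. Let $\mathcal A\subseteq\mathbb R$ and let $\varphi_\alpha:(0,\infty)\to(0,\infty)$, $\alpha\in\mathcal A$, be a family of functions. For $\alpha\in\mathcal A$ let $G_\alpha$ be obtained from $G$ by replacing each edge weight $w$ by $\varphi_\alpha(w)$, let $L_\alpha$ be the Laplacian matrix of $G_\alpha$, let $Q_\alpha=(I+L_\alpha)^{-1}=(q_{ij}(\alpha))$, and let $\theta_\alpha>0$ be a scaling factor; the logarithmic forest distance is $d^F_\alpha(i,j)=\theta_\alpha\bigl(\tfrac12(\ln q_{ii}(\alpha)+\ln q_{jj}(\alpha))-\ln q_{ij}(\alpha)\bigr)$. Then for every $\alpha\in\mathcal A$ there are a constant $c_\alpha>0$ and a graph $\tilde G_\alpha$ obtained from $G_\alpha$ by multiplying all edge weights by $c_\alpha$ and attaching loops (with positive weights) to some vertices so that its weighted adjacency matrix $A(\alpha)$ has constant row sums, such that the spectral radius of $A(\alpha)$ is less than $1$, $\tilde R_\alpha=\sum_{k\ge0}A(\alpha)^k=(I-A(\alpha))^{-1}=(\tilde r_{ij}(\alpha))$ is finite, and for all $i,j\in V$ $$d^F_\alpha(i,j)=\theta_\alpha\Bigl(\tfrac12\bigl(\ln\tilde r_{ii}(\alpha)+\ln\tilde r_{jj}(\alpha)\bigr)-\ln\tilde r_{ij}(\alpha)\Bigr).$$ Thus the family of logarithmic forest distances coincides with a family of modified walk distances obtained by balancing the graphs $G_\alpha$ by loops.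
   Context: The weighted adjacency matrix $A(H)=(a_{ij})$ of a weighted multigraph $H$ has $a_{ij}$ equal to the sum of the weights of the edges joining $i$ and $j$ (loops included). The Laplacian matrix is $L(H)=\operatorname{diag}(A(H)\mathbf 1)-A(H)$. *)

theory Defs
  imports "Jordan_Normal_Form.Spectral_Radius" "Jordan_Normal_Form.Gauss_Jordan_Elimination"
begin

text \<open>A weighted multigraph on the vertex set {0..<n}: a finite set of edge names E,
  each edge e joining the endpoints ends e (a loop if both are equal), with weight w e.\<close>

definition joins :: "('e \<Rightarrow> nat \<times> nat) \<Rightarrow> 'e \<Rightarrow> nat \<Rightarrow> nat \<Rightarrow> bool" where
  "joins ends e i j \<longleftrightarrow> ends e = (i, j) \<or> ends e = (j, i)"

definition wmultigraph :: "nat \<Rightarrow> 'e set \<Rightarrow> ('e \<Rightarrow> nat \<times> nat) \<Rightarrow> ('e \<Rightarrow> real) \<Rightarrow> bool" where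
  "wmultigraph n E ends w \<longleftrightarrow> finite E \<and>
     (\<forall>e\<in>E. fst (ends e) < n \<and> snd (ends e) < n \<and> w e > 0)"

definition mg_connected :: "nat \<Rightarrow> 'e set \<Rightarrow> ('e \<Rightarrow> nat \<times> nat) \<Rightarrow> bool" where
  "mg_connected n E ends \<longleftrightarrow>
     (\<forall>i<n. \<forall>j<n. (i, j) \<in> {(u, v). \<exists>e\<in>E. joins ends e u v}\<^sup>*)"

definition adj_mat :: "nat \<Rightarrow> 'e set \<Rightarrow> ('e \<Rightarrow> nat \<times> nat) \<Rightarrow> ('e \<Rightarrow> real) \<Rightarrow> real mat" where
  "adj_mat n E ends w = mat n n (\<lambda>(i, j). \<Sum>e\<in>{e\<in>E. joins ends e i j}. w e)"

definition laplacian :: "nat \<Rightarrow> real mat \<Rightarrow> real mat" where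
  "laplacian n A = mat n n (\<lambda>(i, j). (if i = j then (\<Sum>k<n. A $$ (i, k)) else 0) - A $$ (i, j))"

definition row_sums_const :: "nat \<Rightarrow> real mat \<Rightarrow> bool" where
  "row_sums_const n A \<longleftrightarrow> (\<exists>s. \<forall>i<n. (\<Sum>j<n. A $$ (i, j)) = s)"

definition log_dist :: "real \<Rightarrow> real mat \<Rightarrow> nat \<Rightarrow> nat \<Rightarrow> real" where
  "log_dist \<theta> M i j = \<theta> * ((ln (M $$ (i, i)) + ln (M $$ (j, j))) / 2 - ln (M $$ (i, j)))"

definition forest_mat :: "nat \<Rightarrow> real mat \<Rightarrow> real mat" where
  "forest_mat n L = the (mat_inverse (1\<^sub>m n + L))"

definition log_forest_dist :: "nat \<Rightarrow> 'e set \<Rightarrow> ('e \<Rightarrow> nat \<times> nat) \<Rightarrow> ('e \<Rightarrow> real) \<Rightarrow> real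
    \<Rightarrow> nat \<Rightarrow> nat \<Rightarrow> real" where
  "log_forest_dist n E ends w \<theta> i j =
     log_dist \<theta> (forest_mat n (laplacian n (adj_mat n E ends w))) i j"

end

theory Submission
  imports Defs
begin

text \<open>Choose c = 1/(1 + M), M the total weight of the graph, and add at vertex i a loop of
  weight c(M - d_i), d_i the weighted degree. The balanced matrix A is nonnegative with all row
  sums equal to cM < 1, so its spectral radius is below 1 and the Neumann series
  R = \<Sum> A^k converges to (I - A)^(-1). Moreover I - A = c(I + L), hence the forest matrix
  is Q = cR. Connectivity makes every entry of R positive, and a logarithmic distance does not
  change when a positive matrix is multiplied by a positive constant.\<close>

lemma index_mult_mat_sum:
  fixes A B :: "'a::comm_semiring_1 mat"
  assumes "A \<in> carrier_mat n n" "B \<in> carrier_mat n n" "i < n" "j < n"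
  shows "(A * B) $$ (i, j) = (\<Sum>m<n. A $$ (i, m) * B $$ (m, j))"
  using assms by (simp add: scalar_prod_def lessThan_atLeast0)

lemma mat_inverse_eq_left_inverse:
  fixes X P :: "'a::field mat"
  assumes X: "X \<in> carrier_mat n n" and P: "P \<in> carrier_mat n n" and PX: "P * X = 1\<^sub>m n"
  shows "the (mat_inverse X) = P"
proof (cases "mat_inverse X")
  case None
  have "X * P = 1\<^sub>m n" by (rule mat_mult_left_right_inverse[OF P X PX])
  then have "X \<in> Units (ring_mat TYPE('a) n (undefined::unit))"
    unfolding Units_def using X P PX by (auto simp: ring_mat_simps ring_mat_def)
  with mat_inverse(1)[OF X None, where b = "undefined::unit"] show ?thesis by blast
next
  case (Some B)
  from mat_inverse(2)[OF X Some] have B: "X * B = 1\<^sub>m n" "B \<in> carrier_mat n n" by auto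
  have "P = P * (X * B)" using B P by simp
  also have "\<dots> = (P * X) * B" using P X B by (simp add: assoc_mult_mat)
  also have "\<dots> = B" using PX B by simp
  finally show ?thesis using Some by simp
qed

lemma forest_mat_eq_smult_inverse:
  fixes L R :: "real mat"
  assumes L: "L \<in> carrier_mat n n" and R: "R \<in> carrier_mat n n"
    and "R * X = 1\<^sub>m n" and "X = c \<cdot>\<^sub>m (1\<^sub>m n + L)"
  shows "forest_mat n L = c \<cdot>\<^sub>m R"
  unfolding forest_mat_def
proof (rule mat_inverse_eq_left_inverse)
  have IL: "1\<^sub>m n + L \<in> carrier_mat n n" using L by simp
  show "(c \<cdot>\<^sub>m R) * (1\<^sub>m n + L) = 1\<^sub>m n"
    using mult_smult_assoc_mat[OF R IL] mult_smult_distrib[OF R IL] assms(3,4) by simp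
qed (use L R in simp_all)

lemma log_dist_smult:
  assumes "c > 0" "M \<in> carrier_mat n n" "i < n" "j < n"
    and "\<And>a b. a < n \<Longrightarrow> b < n \<Longrightarrow> M $$ (a, b) > 0"
  shows "log_dist \<theta> (c \<cdot>\<^sub>m M) i j = log_dist \<theta> M i j"
proof -
  have "ln ((c \<cdot>\<^sub>m M) $$ (a, b)) = ln c + ln (M $$ (a, b))" if "a < n" "b < n" for a b
    using assms(1,2) assms(5)[OF that] that by (simp add: ln_mult)
  then show ?thesis using assms(3,4) by (simp add: log_dist_def algebra_simps)
qed

locale nonneg_const_row_sum =
  fixes n :: nat and A :: "real mat" and s :: real
  assumes carrier: "A \<in> carrier_mat n n"
    and nonneg: "\<And>i j. i < n \<Longrightarrow> j < n \<Longrightarrow> A $$ (i, j) \<ge> 0"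
    and row_sum: "\<And>i. i < n \<Longrightarrow> (\<Sum>j<n. A $$ (i, j)) = s"
begin

lemma power_nonneg_row_sum:
  "(\<forall>i<n. \<forall>j<n. (A ^\<^sub>m k) $$ (i, j) \<ge> 0) \<and> (\<forall>i<n. (\<Sum>j<n. (A ^\<^sub>m k) $$ (i, j)) = s ^ k)"
proof (induction k)
  case 0
  then show ?case using carrier by auto
next
  case (Suc k)
  have entry: "(A ^\<^sub>m k * A) $$ (i, j) = (\<Sum>m<n. (A ^\<^sub>m k) $$ (i, m) * A $$ (m, j))"
    if "i < n" "j < n" for i j
    using index_mult_mat_sum[OF pow_carrier_mat[OF carrier] carrier that] by simp
  have "(A ^\<^sub>m Suc k) $$ (i, j) \<ge> 0" if "i < n" "j < n" for i j
    using Suc nonneg that by (auto simp: entry intro!: sum_nonneg)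
  moreover have "(\<Sum>j<n. (A ^\<^sub>m Suc k) $$ (i, j)) = s ^ Suc k" if i: "i < n" for i
  proof -
    have "(\<Sum>j<n. (A ^\<^sub>m Suc k) $$ (i, j)) = (\<Sum>j<n. \<Sum>m<n. (A ^\<^sub>m k) $$ (i, m) * A $$ (m, j))"
      using i by (simp add: entry)
    also have "\<dots> = (\<Sum>m<n. (A ^\<^sub>m k) $$ (i, m) * (\<Sum>j<n. A $$ (m, j)))"
      by (subst sum.swap) (simp add: sum_distrib_left)
    also have "\<dots> = (\<Sum>m<n. (A ^\<^sub>m k) $$ (i, m)) * s"
      by (simp add: row_sum sum_distrib_right)
    finally show ?thesis using Suc i by simp
  qed
  ultimately show ?case by blast
qed

lemma power_nonneg: "i < n \<Longrightarrow> j < n \<Longrightarrow> (A ^\<^sub>m k) $$ (i, j) \<ge> 0"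
  using power_nonneg_row_sum by blast

lemma power_row_sum: "i < n \<Longrightarrow> (\<Sum>j<n. (A ^\<^sub>m k) $$ (i, j)) = s ^ k"
  using power_nonneg_row_sum by blast

lemma power_entry_le: "i < n \<Longrightarrow> j < n \<Longrightarrow> (A ^\<^sub>m k) $$ (i, j) \<le> s ^ k"
  using member_le_sum[of j "{..<n}" "\<lambda>j. (A ^\<^sub>m k) $$ (i, j)"] power_nonneg power_row_sum
  by auto

lemma norm_eigenvalue_le:
  assumes "eigenvector (map_mat complex_of_real A) v l"
  shows "norm l \<le> s"
proof -
  have v: "v \<in> carrier_vec n" "v \<noteq> 0\<^sub>v n" "map_mat complex_of_real A *\<^sub>v v = l \<cdot>\<^sub>v v"
    using assms carrier unfolding eigenvector_def by auto
  then obtain j where j: "j < n" "v $ j \<noteq> 0"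
    by (metis eq_vecI carrier_vecD index_zero_vec(1,2))
  define m where "m = Max ((\<lambda>i. norm (v $ i)) ` {..<n})"
  obtain i where i: "i < n" "norm (v $ i) = m"
    unfolding m_def using Max_in[of "(\<lambda>i. norm (v $ i)) ` {..<n}"] j(1) by fastforce
  have le_m: "norm (v $ j) \<le> m" if "j < n" for j
    unfolding m_def using that by auto
  have m_pos: "m > 0" using le_m[OF j(1)] j(2) by (meson less_le_trans zero_less_norm_iff)
  have "l * v $ i = (map_mat complex_of_real A *\<^sub>v v) $ i" using v i by simp
  also have "\<dots> = (\<Sum>j<n. complex_of_real (A $$ (i, j)) * v $ j)"
    using carrier v(1) i by (simp add: scalar_prod_def lessThan_atLeast0)
  finally have "l * v $ i = (\<Sum>j<n. complex_of_real (A $$ (i, j)) * v $ j)" .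
  then have "norm l * m \<le> (\<Sum>j<n. norm (complex_of_real (A $$ (i, j)) * v $ j))"
    using i norm_sum by (metis norm_mult)
  also have "\<dots> \<le> (\<Sum>j<n. A $$ (i, j) * m)"
    using nonneg i le_m by (intro sum_mono) (simp add: norm_mult mult_left_mono)
  also have "\<dots> = s * m" using row_sum i by (simp add: sum_distrib_right[symmetric])
  finally show ?thesis using m_pos by simp
qed

lemma spectral_radius_le:
  assumes "n > 0"
  shows "spectral_radius (map_mat complex_of_real A) \<le> s"
proof -
  obtain l where "l \<in> spectrum (map_mat complex_of_real A)"
    "spectral_radius (map_mat complex_of_real A) = norm l"
    using spectral_radius_mem_max(1)[of "map_mat complex_of_real A", OF _ assms] carrier by auto
  then show ?thesis using norm_eigenvalue_le unfolding spectrum_def eigenvalue_def by auto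
qed

definition walk_mat :: "real mat" where
  "walk_mat = mat n n (\<lambda>(i, j). \<Sum>k. (A ^\<^sub>m k) $$ (i, j))"

context
  assumes lt_one: "s < 1"
begin

lemma power_entry_summable:
  assumes "i < n" "j < n"
  shows "summable (\<lambda>k. (A ^\<^sub>m k) $$ (i, j))"
proof (rule summable_comparison_test[OF _ summable_geometric[of s]])
  have "s \<ge> 0" using row_sum[of i] nonneg assms by (metis sum_nonneg lessThan_iff)
  then show "norm s < 1" using lt_one by simp
  show "\<exists>N. \<forall>k\<ge>N. norm ((A ^\<^sub>m k) $$ (i, j)) \<le> s ^ k"
    using power_entry_le power_nonneg assms by auto
qed

lemma walk_mat_partial_sums:
  "i < n \<Longrightarrow> j < n \<Longrightarrow> (\<lambda>N. \<Sum>k<N. (A ^\<^sub>m k) $$ (i, j)) \<longlonglongrightarrow> walk_mat $$ (i, j)"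
  using summable_LIMSEQ[OF power_entry_summable] by (simp add: walk_mat_def)

lemma walk_mat_inverse: "walk_mat * (1\<^sub>m n - A) = 1\<^sub>m n"
proof (rule eq_matI)
  fix i j assume "i < dim_row (1\<^sub>m n :: real mat)" "j < dim_col (1\<^sub>m n :: real mat)"
  then have i: "i < n" and j: "j < n" by auto
  let ?R = walk_mat
  have R: "?R \<in> carrier_mat n n" by (simp add: walk_mat_def)
  have "(?R * (1\<^sub>m n - A)) $$ (i, j) = (?R * 1\<^sub>m n - ?R * A) $$ (i, j)"
    by (simp add: mult_minus_distrib_mat[OF R one_carrier_mat carrier])
  also have "\<dots> = ?R $$ (i, j) - (\<Sum>m<n. ?R $$ (i, m) * A $$ (m, j))"
    using R carrier i j index_mult_mat_sum[OF R carrier i j] by simp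
  also have "(\<Sum>m<n. ?R $$ (i, m) * A $$ (m, j)) = (\<Sum>k. \<Sum>m<n. (A ^\<^sub>m k) $$ (i, m) * A $$ (m, j))"
    using i power_entry_summable[OF i]
    by (subst suminf_sum) (auto simp: walk_mat_def suminf_mult2 intro!: summable_mult2 sum.cong)
  also have "\<dots> = (\<Sum>k. (A ^\<^sub>m Suc k) $$ (i, j))"
    using index_mult_mat_sum[OF pow_carrier_mat[OF carrier] carrier i j] by simp
  also have "\<dots> = ?R $$ (i, j) - 1\<^sub>m n $$ (i, j)"
    using suminf_split_head[OF power_entry_summable[OF i j]] i j carrier
    by (simp add: walk_mat_def)
  finally show "(?R * (1\<^sub>m n - A)) $$ (i, j) = 1\<^sub>m n $$ (i, j)" by simp
qed (use carrier in \<open>simp_all add: walk_mat_def\<close>)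

end

lemma power_pos_of_path:
  assumes "(i, j) \<in> {(u, v). u < n \<and> v < n \<and> A $$ (u, v) > 0}\<^sup>*" and "i < n"
  shows "j < n \<and> (\<exists>k. (A ^\<^sub>m k) $$ (i, j) > 0)"
  using assms(1)
proof (induction rule: rtrancl_induct)
  case base
  then show ?case using assms(2) carrier by (intro conjI exI[of _ 0]) auto
next
  case (step u v)
  then obtain k where u: "u < n" and k: "(A ^\<^sub>m k) $$ (i, u) > 0" by auto
  from step(2) have v: "v < n" and a: "A $$ (u, v) > 0" by auto
  have "(A ^\<^sub>m k) $$ (i, u) * A $$ (u, v) \<le> (\<Sum>m<n. (A ^\<^sub>m k) $$ (i, m) * A $$ (m, v))"
    using power_nonneg nonneg u v assms(2) by (intro member_le_sum) auto
  also have "\<dots> = (A ^\<^sub>m Suc k) $$ (i, v)"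
    using index_mult_mat_sum[OF pow_carrier_mat[OF carrier] carrier assms(2) v] by simp
  finally have "(A ^\<^sub>m Suc k) $$ (i, v) > 0" using k a
    by (meson less_le_trans mult_pos_pos)
  then show ?case using v by blast
qed

lemma walk_mat_pos:
  assumes "s < 1" "i < n" "j < n"
    and "(i, j) \<in> {(u, v). u < n \<and> v < n \<and> A $$ (u, v) > 0}\<^sup>*"
  shows "walk_mat $$ (i, j) > 0"
proof -
  obtain k where k: "(A ^\<^sub>m k) $$ (i, j) > 0" using power_pos_of_path assms(2,4) by blast
  have "(\<Sum>k\<in>{k}. (A ^\<^sub>m k) $$ (i, j)) \<le> (\<Sum>k. (A ^\<^sub>m k) $$ (i, j))"
    using power_entry_summable power_nonneg assms(1-3) by (intro sum_le_suminf) auto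
  then show ?thesis using k assms(2,3) by (simp add: walk_mat_def)
qed

end

definition loop_mat :: "nat \<Rightarrow> (nat \<Rightarrow> real) \<Rightarrow> real mat" where
  "loop_mat n lw = mat n n (\<lambda>(i, j). if i = j then lw i else 0)"

lemma loop_balancing:
  fixes W :: "real mat"
  assumes W: "W \<in> carrier_mat n n" and W_nonneg: "\<And>i j. i < n \<Longrightarrow> j < n \<Longrightarrow> W $$ (i, j) \<ge> 0"
  obtains c lw s where "c > 0" "\<forall>i<n. lw i \<ge> 0" "s < 1"
    "\<And>i. i < n \<Longrightarrow> (\<Sum>j<n. (c \<cdot>\<^sub>m W + loop_mat n lw) $$ (i, j)) = s"
    "1\<^sub>m n - (c \<cdot>\<^sub>m W + loop_mat n lw) = c \<cdot>\<^sub>m (1\<^sub>m n + laplacian n W)"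
proof -
  define d where "d i = (\<Sum>k<n. W $$ (i, k))" for i
  define M where "M = (\<Sum>i<n. d i)"
  define c where "c = 1 / (1 + M)"
  define lw where "lw i = c * (M - d i)" for i
  have d_nonneg: "d i \<ge> 0" if "i < n" for i
    unfolding d_def using W_nonneg that by (auto intro: sum_nonneg)
  have d_le: "d i \<le> M" if "i < n" for i
    unfolding M_def using d_nonneg that by (intro member_le_sum) auto
  have "M \<ge> 0" unfolding M_def using d_nonneg by (auto intro: sum_nonneg)
  then have c_pos: "c > 0" and cM: "c * M = 1 - c"
    unfolding c_def by (simp_all add: field_simps)
  have entry: "(c \<cdot>\<^sub>m W + loop_mat n lw) $$ (i, j) = c * W $$ (i, j) + (if i = j then lw i else 0)"
    and entry_minus: "(1\<^sub>m n - (c \<cdot>\<^sub>m W + loop_mat n lw)) $$ (i, j)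
      = (if i = j then 1 else 0) - (c * W $$ (i, j) + (if i = j then lw i else 0))"
    if "i < n" "j < n" for i j
    using W that by (simp_all add: loop_mat_def)
  show thesis
  proof
    show "c > 0" by (fact c_pos)
    show "\<forall>i<n. lw i \<ge> 0" unfolding lw_def using c_pos d_le by simp
    show "c * M < 1" using cM c_pos by simp
    show "(\<Sum>j<n. (c \<cdot>\<^sub>m W + loop_mat n lw) $$ (i, j)) = c * M" if "i < n" for i
      using that by (simp add: entry sum.distrib sum_distrib_left[symmetric] d_def[symmetric]
          lw_def algebra_simps)
    show "1\<^sub>m n - (c \<cdot>\<^sub>m W + loop_mat n lw) = c \<cdot>\<^sub>m (1\<^sub>m n + laplacian n W)"
    proof (rule eq_matI)
      fix i j assume "i < dim_row (c \<cdot>\<^sub>m (1\<^sub>m n + laplacian n W))"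
        "j < dim_col (c \<cdot>\<^sub>m (1\<^sub>m n + laplacian n W))"
      then have i: "i < n" and j: "j < n" by (simp_all add: laplacian_def)
      show "(1\<^sub>m n - (c \<cdot>\<^sub>m W + loop_mat n lw)) $$ (i, j) = (c \<cdot>\<^sub>m (1\<^sub>m n + laplacian n W)) $$ (i, j)"
        using i j W cM
        by (simp add: entry_minus laplacian_def d_def[symmetric] lw_def algebra_simps)
    qed (simp_all add: laplacian_def loop_mat_def)
  qed
qed

lemma adj_mat_nonneg:
  assumes "wmultigraph n E ends w" "i < n" "j < n"
  shows "adj_mat n E ends w $$ (i, j) \<ge> 0"
  using assms unfolding wmultigraph_def adj_mat_def by (auto intro!: sum_nonneg simp: less_imp_le)

lemma adj_mat_pos_of_joins:
  assumes "wmultigraph n E ends w" "e \<in> E" "joins ends e i j"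
  shows "i < n \<and> j < n \<and> adj_mat n E ends w $$ (i, j) > 0"
proof -
  have G: "finite E" "\<forall>e\<in>E. fst (ends e) < n \<and> snd (ends e) < n \<and> w e > 0"
    using assms(1) unfolding wmultigraph_def by auto
  then have ij: "i < n" "j < n" using assms(2,3) unfolding joins_def by (metis fst_conv snd_conv)+
  have "w e \<le> (\<Sum>e\<in>{e\<in>E. joins ends e i j}. w e)"
    using G assms(2,3) by (intro member_le_sum) (auto intro: less_imp_le)
  then show ?thesis using ij G assms(2) by (simp add: adj_mat_def) (meson less_le_trans)
qed

lemma log_forest_dist_eq_balanced_walk_dist:
  fixes E :: "'e set"
  assumes n: "n > 0" and G: "wmultigraph n E ends w" and conn: "mg_connected n E ends"
  shows "\<exists>c > 0. \<exists>lw :: nat \<Rightarrow> real. (\<forall>i<n. lw i \<ge> 0) \<and>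
     (let A = c \<cdot>\<^sub>m adj_mat n E ends w + loop_mat n lw
      in row_sums_const n A \<and>
         spectral_radius (map_mat complex_of_real A) < 1 \<and>
         (\<exists>R \<in> carrier_mat n n.
            (\<forall>i<n. \<forall>j<n. (\<lambda>N. \<Sum>k<N. (A ^\<^sub>m k) $$ (i, j)) \<longlonglongrightarrow> R $$ (i, j)) \<and>
            R * (1\<^sub>m n - A) = 1\<^sub>m n \<and>
            (\<forall>i<n. \<forall>j<n. log_forest_dist n E ends w \<theta> i j = log_dist \<theta> R i j)))"
proof -
  define W where "W = adj_mat n E ends w"
  have W: "W \<in> carrier_mat n n" by (simp add: W_def adj_mat_def)
  have W_nonneg: "W $$ (i, j) \<ge> 0" if "i < n" "j < n" for i j
    unfolding W_def using adj_mat_nonneg[OF G that] .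
  obtain c lw s where c: "c > 0" and lw: "\<forall>i<n. lw i \<ge> 0" and s: "s < 1"
    and row_sum: "\<And>i. i < n \<Longrightarrow> (\<Sum>j<n. (c \<cdot>\<^sub>m W + loop_mat n lw) $$ (i, j)) = s"
    and forest: "1\<^sub>m n - (c \<cdot>\<^sub>m W + loop_mat n lw) = c \<cdot>\<^sub>m (1\<^sub>m n + laplacian n W)"
    using loop_balancing[OF W W_nonneg] by blast
  define A where "A = c \<cdot>\<^sub>m W + loop_mat n lw"
  have A: "A \<in> carrier_mat n n" by (simp add: A_def W loop_mat_def)
  have A_ge: "A $$ (i, j) \<ge> c * W $$ (i, j)" and A_nonneg: "A $$ (i, j) \<ge> 0"
    if "i < n" "j < n" for i j
    using W that lw W_nonneg[OF that] c by (simp_all add: A_def loop_mat_def)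
  interpret nonneg_const_row_sum n A s
    using A A_nonneg row_sum by unfold_locales (simp_all add: A_def)
  define R where "R = walk_mat"
  have R: "R \<in> carrier_mat n n" by (simp add: R_def walk_mat_def)
  have edges_pos: "{(u, v). \<exists>e\<in>E. joins ends e u v} \<subseteq> {(u, v). u < n \<and> v < n \<and> A $$ (u, v) > 0}"
    using adj_mat_pos_of_joins[OF G] A_ge c
    by (auto simp: W_def[symmetric]) (meson less_le_trans mult_pos_pos)
  have R_pos: "R $$ (i, j) > 0" if "i < n" "j < n" for i j
  proof -
    have "(i, j) \<in> {(u, v). \<exists>e\<in>E. joins ends e u v}\<^sup>*"
      using conn that unfolding mg_connected_def by blast
    then have "(i, j) \<in> {(u, v). u < n \<and> v < n \<and> A $$ (u, v) > 0}\<^sup>*"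
      using rtrancl_mono[OF edges_pos] by blast
    then show ?thesis unfolding R_def using walk_mat_pos[OF s that] by blast
  qed
  have "forest_mat n (laplacian n W) = c \<cdot>\<^sub>m R"
    using walk_mat_inverse[OF s] forest R
    by (intro forest_mat_eq_smult_inverse) (simp_all add: laplacian_def R_def A_def)
  then have "log_forest_dist n E ends w \<theta> i j = log_dist \<theta> R i j" if "i < n" "j < n" for i j
    using log_dist_smult[OF c R that R_pos] by (simp add: log_forest_dist_def W_def)
  moreover have "row_sums_const n A"
    unfolding row_sums_const_def using row_sum by (auto simp: A_def)
  moreover have "spectral_radius (map_mat complex_of_real A) < 1"
    using spectral_radius_le[OF n] s by simp
  ultimately show ?thesis
    using c lw R walk_mat_partial_sums[OF s] walk_mat_inverse[OF s]
    unfolding Let_def A_def W_def R_def by (intro exI[of _ c] conjI exI[of _ lw] bexI) auto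
qed

theorem theorem7:
  fixes n :: nat and E :: "'e set" and ends :: "'e \<Rightarrow> nat \<times> nat" and w :: "'e \<Rightarrow> real"
    and As :: "real set" and \<phi> :: "real \<Rightarrow> real \<Rightarrow> real" and \<theta> :: "real \<Rightarrow> real"
  assumes "n \<ge> 2"
    and "wmultigraph n E ends w"
    and "mg_connected n E ends"
    and "\<And>\<alpha> x. \<alpha> \<in> As \<Longrightarrow> x > 0 \<Longrightarrow> \<phi> \<alpha> x > 0"
    and "\<And>\<alpha>. \<alpha> \<in> As \<Longrightarrow> \<theta> \<alpha> > 0"
  shows "\<forall>\<alpha>\<in>As. \<exists>c > 0. \<exists>lw :: nat \<Rightarrow> real. (\<forall>i<n. lw i \<ge> 0) \<and>
     (let A = c \<cdot>\<^sub>m adj_mat n E ends (\<lambda>e. \<phi> \<alpha> (w e)) + mat n n (\<lambda>(i, j). if i = j then lw i else 0)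
      in row_sums_const n A \<and>
         spectral_radius (map_mat complex_of_real A) < 1 \<and>
         (\<exists>R \<in> carrier_mat n n.
            (\<forall>i<n. \<forall>j<n. (\<lambda>N. \<Sum>k<N. (A ^\<^sub>m k) $$ (i, j)) \<longlonglongrightarrow> R $$ (i, j)) \<and>
            R * (1\<^sub>m n - A) = 1\<^sub>m n \<and>
            (\<forall>i<n. \<forall>j<n. log_forest_dist n E ends (\<lambda>e. \<phi> \<alpha> (w e)) (\<theta> \<alpha>) i j
                           = log_dist (\<theta> \<alpha>) R i j)))"
proof -
  have "\<forall>\<alpha>\<in>As. wmultigraph n E ends (\<lambda>e. \<phi> \<alpha> (w e))"
    using assms(2,4) unfolding wmultigraph_def by auto
  moreover have "n > 0" using assms(1) by simp
  ultimately show ?thesis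
    by (intro ballI log_forest_dist_eq_balanced_walk_dist[OF _ _ assms(3), unfolded loop_mat_def])
      auto
qed

end
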